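(* Let $H=(V,E)$ be a hypergraph whose vertex set $V$ is a partition of $[n]$ into sets of cardinality at least $2$. Choose $\bar i_I\in I$ for each $I\in V$ and let $R=\{\bar i_I\}_{I\in V}$, and let $\mathcal{J}^H|_R=\{J\in\mathcal{J}^H: J\subseteq R\}$. Then the map $J\mapsto E(J)$ is a bijection from $\mathcal{J}^H|_R$ onto $L(V)\cup E$, and the linear map $w\mapsto z$ defined by $z_{E(J)}=w_J$ for all $J\in\mathcal{J}^H|_R$ is a one-to-one correspondence between $\operatorname{proj}_{\mathcal{J}^H|_R}\mathrm{MC}^H$ and $\mathrm{MP}^H$.
   Context: Let $n$ be a positive integer, $[n]=\{1,\dots,n\}$. A hypergraph $H=(V,E)$ here has as vertex set $V$ a family of pairwise disjoint subsets of $[n]$, each of cardinality at least $2$, and hyperedge set $E$ consisting of subsets $e\subseteq V$ with $|e|\ge 2$. Write $L(V)=\{\{I\}: I\in V\}$. For a nonempty $e\subseteq V$, $\mathcal{J}^e$ denotes the family of sets $J\subseteq \bigcup_{I\in e} I$ with $|J\cap I|=1$ for every $I\in e$. Let $\mathcal{J}^H=\bigcup_{e\in L(V)\cup E}\mathcal{J}^e$. For $J$ with $|J\cap I|\le 1$ for all $I\in V$, $E(J)=\{I\in V: |J\cap I|=1\}$. For $w\in\mathbb{R}^{\mathcal{J}^H}$ write $w_i=w_{\{i\}}$ and $w(A)=\sum_{i\in A}w_i$. Let $\mathscr{S}^H=\{w\in\{0,1\}^{\mathcal{J}^H}: w(I)=1\ \forall I\in V;\ w_J=\prod_{i\in J}w_i\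 \forall J\in\mathcal{J}^H, |J|>1\}$ and $\mathrm{MC}^H=\operatorname{conv}\mathscr{S}^H$. The multilinear set is $\mathcal{S}^H=\{z\in\{0,1\}^{L(V)\cup E}: z_e=\prod_{I\in e}z_I\ \forall e\in E\}$, with $z_I=z_{\{I\}}$, and $\mathrm{MP}^H=\operatorname{conv}\mathcal{S}^H$. For a finite index set $S'\subseteq S$, $\operatorname{proj}_{S'}$ extracts the coordinates indexed by $S'$ (applied elementwise to sets). *)

theory Defs
  imports "HOL-Analysis.Analysis"
begin

(* Points of R^S (S a finite index set) are represented as functions S-type => real,
   taking the value 0 outside the index set S. *)

definition conv_fun :: "('a \<Rightarrow> real) set \<Rightarrow> ('a \<Rightarrow> real) set" where
  "conv_fun S = {x. \<exists>(k::nat) (u::nat \<Rightarrow> real) (p::nat \<Rightarrow> 'a \<Rightarrow> real).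
      (\<forall>i<k. 0 \<le> u i \<and> p i \<in> S) \<and> (\<Sum>i<k. u i) = 1 \<and> x = (\<lambda>j. \<Sum>i<k. u i * p i j)}"

definition proj_on :: "'a set \<Rightarrow> ('a \<Rightarrow> real) \<Rightarrow> ('a \<Rightarrow> real)" where
  "proj_on S' w = (\<lambda>J. if J \<in> S' then w J else 0)"

definition partition_vertices :: "nat \<Rightarrow> nat set set \<Rightarrow> bool" where
  "partition_vertices n V \<longleftrightarrow> \<Union>V = {1..n} \<and>
     (\<forall>I\<in>V. \<forall>I'\<in>V. I \<noteq> I' \<longrightarrow> I \<inter> I' = {}) \<and> (\<forall>I\<in>V. 2 \<le> card I)"

definition hyperedges_ok :: "nat set set \<Rightarrow> nat set set set \<Rightarrow> bool" where
  "hyperedges_ok V E \<longleftrightarrow> (\<forall>e\<in>E. e \<subseteq> V \<and> 2 \<le> card e)"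

definition Lv :: "nat set set \<Rightarrow> nat set set set" where
  "Lv V = {{I} | I. I \<in> V}"

definition Jfam :: "nat set set \<Rightarrow> nat set set" where
  "Jfam e = {J. J \<subseteq> \<Union>e \<and> (\<forall>I\<in>e. card (J \<inter> I) = 1)}"

definition JH :: "nat set set \<Rightarrow> nat set set set \<Rightarrow> nat set set" where
  "JH V E = (\<Union>e\<in>Lv V \<union> E. Jfam e)"

definition Eof :: "nat set set \<Rightarrow> nat set \<Rightarrow> nat set set" where
  "Eof V J = {I\<in>V. card (J \<inter> I) = 1}"

definition SH :: "nat set set \<Rightarrow> nat set set set \<Rightarrow> (nat set \<Rightarrow> real) set" where
  "SH V E = {w. (\<forall>J. J \<notin> JH V E \<longrightarrow> w J = 0) \<and>
      (\<forall>J\<in>JH V E. w J \<in> {0,1}) \<and>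
      (\<forall>I\<in>V. (\<Sum>i\<in>I. w {i}) = 1) \<and>
      (\<forall>J\<in>JH V E. card J > 1 \<longrightarrow> w J = (\<Prod>i\<in>J. w {i}))}"

definition MC :: "nat set set \<Rightarrow> nat set set set \<Rightarrow> (nat set \<Rightarrow> real) set" where
  "MC V E = conv_fun (SH V E)"

definition MLset :: "nat set set \<Rightarrow> nat set set set \<Rightarrow> (nat set set \<Rightarrow> real) set" where
  "MLset V E = {z. (\<forall>e. e \<notin> Lv V \<union> E \<longrightarrow> z e = 0) \<and>
      (\<forall>e\<in>Lv V \<union> E. z e \<in> {0,1}) \<and>
      (\<forall>e\<in>E. z e = (\<Prod>I\<in>e. z {I}))}"

definition MP :: "nat set set \<Rightarrow> nat set set set \<Rightarrow> (nat set set \<Rightarrow> real) set" where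
  "MP V E = conv_fun (MLset V E)"

end

(* For J contained in R = rep ` V, the set E(J) consists of the blocks whose representative
   lies in J, so J |-> E(J) is inverted by e |-> rep ` e.  Reading off the coordinates
   z_e = w_(rep ` e) is a linear map, hence it commutes with convex hulls, and it is injective
   on vectors supported on JH|_R.  It maps the 0/1 points of MC^H onto the multilinear set:
   the product constraints of MC^H give z_e = prod (z_I, I in e), and conversely a 0/1 point z
   lifts by choosing in each block I its representative if z_I = 1 and another element
   (which exists since |I| >= 2) otherwise. *)

theory Submission
  imports Defs
begin

lemma conv_funI:
  assumes "\<forall>i<k. 0 \<le> u i \<and> p i \<in> S" "(\<Sum>i<k. u i) = 1"
  shows "(\<lambda>j. \<Sum>i<(k::nat). u i * p i j) \<in> conv_fun S"
  unfolding conv_fun_def using assms by blast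

lemma conv_funE:
  assumes "x \<in> conv_fun S"
  obtains k u p where "\<forall>i<(k::nat). 0 \<le> u i \<and> p i \<in> S" "(\<Sum>i<k. u i) = 1"
    "x = (\<lambda>j. \<Sum>i<k. u i * p i j)"
  using assms unfolding conv_fun_def by blast

lemma conv_fun_linear_image:
  assumes linear: "\<And>k u p. f (\<lambda>j. \<Sum>i<(k::nat). u i * p i j) = (\<lambda>e. \<Sum>i<k. u i * f (p i) e)"
  shows "f ` conv_fun S = conv_fun (f ` S)"
proof
  show "f ` conv_fun S \<subseteq> conv_fun (f ` S)"
  proof
    fix y assume "y \<in> f ` conv_fun S"
    then obtain x where "x \<in> conv_fun S" "y = f x" by blast
    then obtain k u p where "\<forall>i<(k::nat). 0 \<le> u i \<and> p i \<in> S" "(\<Sum>i<k. u i) = 1"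
      and "y = f (\<lambda>j. \<Sum>i<k. u i * p i j)"
      by (auto elim: conv_funE)
    then show "y \<in> conv_fun (f ` S)"
      using conv_funI[of k u "f \<circ> p" "f ` S"] by (simp add: linear)
  qed
next
  show "conv_fun (f ` S) \<subseteq> f ` conv_fun S"
  proof
    fix y assume "y \<in> conv_fun (f ` S)"
    then obtain k u q where convex: "\<forall>i<(k::nat). 0 \<le> u i \<and> q i \<in> f ` S" "(\<Sum>i<k. u i) = 1"
      and y: "y = (\<lambda>j. \<Sum>i<k. u i * q i j)" by (rule conv_funE)
    have "\<forall>i<k. \<exists>s\<in>S. q i = f s" using convex(1) by blast
    then obtain p where p: "\<forall>i<k. p i \<in> S \<and> q i = f (p i)" by metis
    have "y = f (\<lambda>j. \<Sum>i<k. u i * p i j)"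
      unfolding linear y using p by (intro ext sum.cong) auto
    moreover have "(\<lambda>j. \<Sum>i<k. u i * p i j) \<in> conv_fun S"
      using convex p by (intro conv_funI) auto
    ultimately show "y \<in> f ` conv_fun S" by blast
  qed
qed

lemma prod_mem_01:
  assumes "\<forall>i\<in>J. (x i :: 'a :: comm_semiring_1) \<in> {0,1}"
  shows "prod x J \<in> {0,1}"
proof (cases "finite J \<and> (\<exists>i\<in>J. x i = 0)")
  case False
  then have "prod x J = 1" using assms by (metis insert_iff prod.infinite prod.neutral singletonD)
  then show ?thesis by simp
qed (auto intro: prod_zero)

locale partition_reps =
  fixes V :: "nat set set" and rep :: "nat set \<Rightarrow> nat"
  assumes disjoint: "\<lbrakk>I \<in> V; I' \<in> V; i \<in> I; i \<in> I'\<rbrakk> \<Longrightarrow> I = I'"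
    and rep_mem: "I \<in> V \<Longrightarrow> rep I \<in> I"
begin

lemma inj_on_rep: "inj_on rep V"
  using disjoint rep_mem by (metis inj_onI)

lemma Int_subset_reps:
  assumes "J \<subseteq> rep ` V" "I \<in> V"
  shows "J \<inter> I = (if rep I \<in> J then {rep I} else {})"
proof -
  have "J \<inter> I \<subseteq> {rep I}"
  proof
    fix x assume x: "x \<in> J \<inter> I"
    then obtain I' where "I' \<in> V" "x = rep I'" using assms(1) by blast
    with x show "x \<in> {rep I}" using disjoint[of I' I x] assms(2) rep_mem by auto
  qed
  then show ?thesis using rep_mem[OF assms(2)] by auto
qed

lemma Eof_subset_reps:
  assumes "J \<subseteq> rep ` V"
  shows "Eof V J = {I \<in> V. rep I \<in> J}"
proof -
  have "card (J \<inter> I) = 1 \<longleftrightarrow> rep I \<in> J" if "I \<in> V" for I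
    using Int_subset_reps[OF assms that] by simp
  then show ?thesis unfolding Eof_def by blast
qed

lemma image_rep_Eof: "J \<subseteq> rep ` V \<Longrightarrow> rep ` Eof V J = J"
  using Eof_subset_reps by blast

lemma Eof_image_rep: "e \<subseteq> V \<Longrightarrow> Eof V (rep ` e) = e"
  using Eof_subset_reps[of "rep ` e"] inj_on_rep by (auto dest: inj_onD)

lemma image_rep_mem_Jfam:
  assumes "e \<subseteq> V"
  shows "rep ` e \<in> Jfam e"
proof -
  have "rep ` e \<inter> I = {rep I}" if "I \<in> e" for I
    using Int_subset_reps[of "rep ` e" I] assms that by auto
  then show ?thesis unfolding Jfam_def using assms rep_mem by auto
qed

lemma Eof_Jfam:
  assumes "e \<subseteq> V" "J \<in> Jfam e"
  shows "Eof V J = e"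
proof
  show "e \<subseteq> Eof V J" using assms unfolding Jfam_def Eof_def by blast
  show "Eof V J \<subseteq> e"
  proof
    fix I assume "I \<in> Eof V J"
    then have "I \<in> V" and "J \<inter> I \<noteq> {}" unfolding Eof_def by auto
    then obtain I' where "I' \<in> e" "I \<inter> I' \<noteq> {}" using assms(2) unfolding Jfam_def by blast
    then show "I \<in> e" using disjoint \<open>I \<in> V\<close> assms(1) by blast
  qed
qed

lemma bij_betw_Eof:
  assumes "\<forall>e\<in>F. e \<subseteq> V"
  shows "bij_betw (Eof V) {J \<in> (\<Union>e\<in>F. Jfam e). J \<subseteq> rep ` V} F"
proof (rule bij_betw_byWitness[where f' = "image rep"])
  show "Eof V ` {J \<in> (\<Union>e\<in>F. Jfam e). J \<subseteq> rep ` V} \<subseteq> F"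
  proof
    fix x assume "x \<in> Eof V ` {J \<in> (\<Union>e\<in>F. Jfam e). J \<subseteq> rep ` V}"
    then obtain e J where "e \<in> F" "J \<in> Jfam e" "x = Eof V J" by blast
    then show "x \<in> F" using assms Eof_Jfam[of e J] by simp
  qed
  show "image rep ` F \<subseteq> {J \<in> (\<Union>e\<in>F. Jfam e). J \<subseteq> rep ` V}"
  proof
    fix J assume "J \<in> image rep ` F"
    then obtain e where "e \<in> F" "J = rep ` e" by blast
    then show "J \<in> {J \<in> (\<Union>e\<in>F. Jfam e). J \<subseteq> rep ` V}"
      using assms image_rep_mem_Jfam[of e] by blast
  qed
  show "\<forall>J\<in>{J \<in> (\<Union>e\<in>F. Jfam e). J \<subseteq> rep ` V}. rep ` Eof V J = J"
    using image_rep_Eof by blast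
  show "\<forall>e\<in>F. Eof V (rep ` e) = e" using assms Eof_image_rep by blast
qed

lemma inv_into_Eof:
  assumes "\<forall>e\<in>F. e \<subseteq> V" "e \<in> F"
  shows "inv_into {J \<in> (\<Union>e\<in>F. Jfam e). J \<subseteq> rep ` V} (Eof V) e = rep ` e"
proof (rule inv_into_f_eq[OF bij_betw_imp_inj_on[OF bij_betw_Eof[OF assms(1)]]])
  have "e \<subseteq> V" using assms by blast
  then show "rep ` e \<in> {J \<in> (\<Union>e\<in>F. Jfam e). J \<subseteq> rep ` V}"
    using assms(2) image_rep_mem_Jfam by blast
  show "Eof V (rep ` e) = e" using Eof_image_rep[OF \<open>e \<subseteq> V\<close>] .
qed

end

locale hypergraph_reps = partition_reps +
  fixes E :: "nat set set set"
  assumes card_vertex: "I \<in> V \<Longrightarrow> 2 \<le> card I"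
    and edge_subset: "e \<in> E \<Longrightarrow> e \<subseteq> V"
    and card_edge: "e \<in> E \<Longrightarrow> 2 \<le> card e"
begin

lemma subset_vertices: "\<forall>e\<in>Lv V \<union> E. e \<subseteq> V"
  using edge_subset unfolding Lv_def by auto

definition JH_reps :: "nat set set" where
  "JH_reps = {J \<in> JH V E. J \<subseteq> rep ` V}"

lemma bij_betw_Eof_JH_reps: "bij_betw (Eof V) JH_reps (Lv V \<union> E)"
  unfolding JH_reps_def JH_def by (rule bij_betw_Eof[OF subset_vertices])

lemma inv_into_JH_reps: "e \<in> Lv V \<union> E \<Longrightarrow> inv_into JH_reps (Eof V) e = rep ` e"
  unfolding JH_reps_def JH_def by (rule inv_into_Eof[OF subset_vertices])

lemma image_rep_mem_JH_reps:
  assumes "e \<in> Lv V \<union> E"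
  shows "rep ` e \<in> JH_reps"
proof -
  have "e \<subseteq> V" using assms subset_vertices by blast
  then have "rep ` e \<in> Jfam e" "rep ` e \<subseteq> rep ` V" using image_rep_mem_Jfam by auto
  then show ?thesis unfolding JH_reps_def JH_def using assms by blast
qed

text \<open>The map \<open>w \<mapsto> z\<close> of the statement, with the inverse of \<open>E(\<cdot>)\<close> on \<open>JH_reps\<close>
  made explicit as \<open>e \<mapsto> rep ` e\<close>.\<close>

definition rep_coords :: "(nat set \<Rightarrow> real) \<Rightarrow> nat set set \<Rightarrow> real" where
  "rep_coords w e = (if e \<in> Lv V \<union> E then w (rep ` e) else 0)"

lemma rep_coords_Eof:
  assumes "J \<in> JH_reps"
  shows "rep_coords w (Eof V J) = w J"
proof -
  have "Eof V J \<in> Lv V \<union> E" using bij_betw_apply[OF bij_betw_Eof_JH_reps assms] .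
  moreover have "rep ` Eof V J = J" using assms image_rep_Eof unfolding JH_reps_def by blast
  ultimately show ?thesis unfolding rep_coords_def by simp
qed

lemma inj_on_rep_coords: "inj_on rep_coords {w. \<forall>J. J \<notin> JH_reps \<longrightarrow> w J = 0}"
proof (rule inj_onI)
  fix w w' assume w: "w \<in> {w. \<forall>J. J \<notin> JH_reps \<longrightarrow> w J = 0}"
    and w': "w' \<in> {w. \<forall>J. J \<notin> JH_reps \<longrightarrow> w J = 0}"
    and eq: "rep_coords w = rep_coords w'"
  show "w = w'"
  proof
    fix J show "w J = w' J"
    proof (cases "J \<in> JH_reps")
      case True
      then show ?thesis using rep_coords_Eof[OF True] eq by metis
    qed (use w w' in simp)
  qed
qed

lemma rep_coords_proj_on: "rep_coords (proj_on JH_reps w) = rep_coords w"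
proof
  fix e show "rep_coords (proj_on JH_reps w) e = rep_coords w e"
    using image_rep_mem_JH_reps[of e] unfolding rep_coords_def proj_on_def by simp
qed

lemma rep_coords_convex_combination:
  "rep_coords (\<lambda>J. \<Sum>i<(k::nat). u i * p i J) = (\<lambda>e. \<Sum>i<k. u i * rep_coords (p i) e)"
  unfolding rep_coords_def by (simp add: fun_eq_iff)

lemma rep_coords_SH:
  assumes w: "w \<in> SH V E"
  shows "rep_coords w \<in> MLset V E"
  unfolding MLset_def
proof (intro CollectI conjI allI ballI impI)
  have in_JH: "rep ` e \<in> JH V E" if "e \<in> Lv V \<union> E" for e
    using image_rep_mem_JH_reps[OF that] unfolding JH_reps_def by blast
  show "rep_coords w e = 0" if "e \<notin> Lv V \<union> E" for e
    using that unfolding rep_coords_def by simp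
  show "rep_coords w e \<in> {0,1}" if "e \<in> Lv V \<union> E" for e
    using that w in_JH unfolding rep_coords_def SH_def by simp
  fix e assume "e \<in> E"
  then have e: "e \<in> Lv V \<union> E" "e \<subseteq> V" using edge_subset by auto
  have inj: "inj_on rep e" using inj_on_rep e(2) by (rule inj_on_subset)
  then have "card (rep ` e) > 1" using card_edge[OF \<open>e \<in> E\<close>] by (simp add: card_image)
  then have "rep_coords w e = (\<Prod>i\<in>rep ` e. w {i})"
    using e(1) w in_JH unfolding rep_coords_def SH_def by simp
  also have "\<dots> = (\<Prod>I\<in>e. w {rep I})" by (simp add: prod.reindex[OF inj])
  also have "\<dots> = (\<Prod>I\<in>e. rep_coords w {I})"
    using e(2) unfolding rep_coords_def Lv_def by (intro prod.cong) auto
  finally show "rep_coords w e = (\<Prod>I\<in>e. rep_coords w {I})" .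
qed

lemma singleton_mem_JH:
  assumes "I \<in> V" "i \<in> I"
  shows "{i} \<in> JH V E"
proof -
  have "{I} \<in> Lv V" "{i} \<in> Jfam {I}" using assms unfolding Lv_def Jfam_def by auto
  then show ?thesis unfolding JH_def by blast
qed

lemma JH_subset_Union: "J \<in> JH V E \<Longrightarrow> J \<subseteq> \<Union>V"
  using subset_vertices unfolding JH_def Jfam_def by blast

definition choice_point :: "(nat set \<Rightarrow> nat) \<Rightarrow> nat set \<Rightarrow> real" where
  "choice_point ch J = (if J \<in> JH V E then \<Prod>i\<in>J. indicator (ch ` V) i else 0)"

context
  fixes ch :: "nat set \<Rightarrow> nat"
  assumes ch_mem: "\<And>I. I \<in> V \<Longrightarrow> ch I \<in> I"
begin

lemma indicator_choices:
  "I \<in> V \<Longrightarrow> i \<in> I \<Longrightarrow> indicator (ch ` V) i = (if i = ch I then 1 else 0 :: real)"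
  using disjoint ch_mem by (auto simp: indicator_def)

lemma choice_point_singleton:
  "I \<in> V \<Longrightarrow> i \<in> I \<Longrightarrow> choice_point ch {i} = indicator (ch ` V) i"
  unfolding choice_point_def using singleton_mem_JH by simp

lemma choice_point_SH: "choice_point ch \<in> SH V E"
  unfolding SH_def
proof (intro CollectI conjI allI ballI impI)
  show "choice_point ch J = 0" if "J \<notin> JH V E" for J
    using that unfolding choice_point_def by simp
  show "choice_point ch J \<in> {0,1}" if "J \<in> JH V E" for J
  proof -
    have "(\<Prod>i\<in>J. indicator (ch ` V) i) \<in> {0::real, 1}"
      by (rule prod_mem_01) (simp add: indicator_def)
    then show ?thesis using that unfolding choice_point_def by simp
  qed
  show "choice_point ch J = (\<Prod>i\<in>J. choice_point ch {i})" if "J \<in> JH V E" for J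
    using that JH_subset_Union choice_point_singleton unfolding choice_point_def
    by (force intro: prod.cong)
  fix I assume I: "I \<in> V"
  then have "finite I" using card_vertex by (metis card.infinite not_numeral_le_zero)
  have "(\<Sum>i\<in>I. choice_point ch {i}) = (\<Sum>i\<in>I. if i = ch I then 1 else 0)"
  proof (rule sum.cong)
    fix i assume "i \<in> I"
    then show "choice_point ch {i} = (if i = ch I then 1 else 0)"
      using choice_point_singleton[OF I] indicator_choices[OF I] by simp
  qed simp
  also have "\<dots> = 1" using \<open>finite I\<close> ch_mem[OF I] by simp
  finally show "(\<Sum>i\<in>I. choice_point ch {i}) = 1" .
qed

lemma rep_coords_choice_point:
  assumes "e \<in> Lv V \<union> E"
  shows "rep_coords (choice_point ch) e = (\<Prod>I\<in>e. if ch I = rep I then 1 else 0)"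
proof -
  have e: "e \<subseteq> V" using assms subset_vertices by blast
  have "rep ` e \<in> JH V E" using image_rep_mem_JH_reps[OF assms] unfolding JH_reps_def by blast
  then have "rep_coords (choice_point ch) e = (\<Prod>I\<in>e. indicator (ch ` V) (rep I))"
    using assms inj_on_subset[OF inj_on_rep e]
    unfolding rep_coords_def choice_point_def by (simp add: prod.reindex)
  also have "\<dots> = (\<Prod>I\<in>e. if ch I = rep I then 1 else 0)"
  proof (rule prod.cong)
    fix I assume "I \<in> e"
    then show "indicator (ch ` V) (rep I) = (if ch I = rep I then 1 else 0 :: real)"
      using indicator_choices[of I "rep I"] rep_mem e by auto
  qed simp
  finally show ?thesis .
qed

end

lemma MLset_subset_rep_coords_SH: "MLset V E \<subseteq> rep_coords ` SH V E"
proof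
  fix z assume z: "z \<in> MLset V E"
  have "\<exists>i. i \<in> I \<and> i \<noteq> rep I" if "I \<in> V" for I
    using card_vertex[OF that] card_mono[of "{rep I}" I] by fastforce
  then obtain other where other: "\<And>I. I \<in> V \<Longrightarrow> other I \<in> I \<and> other I \<noteq> rep I" by metis
  define ch where "ch I = (if z {I} = 1 then rep I else other I)" for I
  have ch_mem: "ch I \<in> I" if "I \<in> V" for I
    using other[OF that] rep_mem[OF that] unfolding ch_def by auto
  have "rep_coords (choice_point ch) e = z e" for e
  proof (cases "e \<in> Lv V \<union> E")
    case True
    have e: "e \<subseteq> V" using True subset_vertices by blast
    have "{I} \<in> Lv V" if "I \<in> e" for I using that e unfolding Lv_def by auto
    then have "(if ch I = rep I then 1 else 0) = z {I}" if "I \<in> e" for I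
      using that z other e unfolding MLset_def ch_def by fastforce
    then have "rep_coords (choice_point ch) e = (\<Prod>I\<in>e. z {I})"
      using rep_coords_choice_point[OF ch_mem True] by simp
    also have "\<dots> = z e" using z True unfolding MLset_def Lv_def by auto
    finally show ?thesis .
  qed (use z in \<open>simp add: rep_coords_def MLset_def\<close>)
  then show "z \<in> rep_coords ` SH V E" using choice_point_SH[OF ch_mem] by (metis ext image_eqI)
qed

lemma rep_coords_image_SH: "rep_coords ` SH V E = MLset V E"
  using rep_coords_SH MLset_subset_rep_coords_SH by blast

lemma rep_coords_image_MC: "rep_coords ` MC V E = MP V E"
  unfolding MC_def MP_def rep_coords_image_SH[symmetric]
  by (rule conv_fun_linear_image[OF rep_coords_convex_combination])

end

theorem proposition2p1:
  fixes n :: nat and V :: "nat set set" and E :: "nat set set set"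
    and rep :: "nat set \<Rightarrow> nat"
  assumes "0 < n" and "partition_vertices n V"
    and "hyperedges_ok V E"
    and "\<forall>I\<in>V. rep I \<in> I"
  defines "R \<equiv> rep ` V"
  defines "JR \<equiv> {J \<in> JH V E. J \<subseteq> R}"
  defines "T \<equiv> (\<lambda>w::nat set \<Rightarrow> real. \<lambda>e::nat set set.
              if e \<in> Lv V \<union> E then w (inv_into JR (Eof V) e) else 0)"
  shows "bij_betw (Eof V) JR (Lv V \<union> E)
       \<and> (\<forall>w. \<forall>J\<in>JR. T w (Eof V J) = w J)
       \<and> bij_betw T (proj_on JR ` MC V E) (MP V E)"
proof -
  interpret hypergraph_reps V rep E
  proof
    show "I = I'" if "I \<in> V" "I' \<in> V" "i \<in> I" "i \<in> I'" for I I' i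
      using that assms(2) unfolding partition_vertices_def by blast
    show "2 \<le> card I" if "I \<in> V" for I
      using that assms(2) unfolding partition_vertices_def by blast
  qed (use assms(3,4) in \<open>auto simp: hyperedges_ok_def\<close>)
  have JR: "JR = JH_reps" unfolding JR_def R_def JH_reps_def ..
  have T: "T = rep_coords"
    unfolding T_def JR by (intro ext) (simp add: rep_coords_def inv_into_JH_reps)
  have "inj_on T (proj_on JR ` MC V E)"
    unfolding T JR by (rule inj_on_subset[OF inj_on_rep_coords]) (auto simp: proj_on_def)
  moreover have "T ` proj_on JR ` MC V E = MP V E"
    unfolding T JR image_image rep_coords_proj_on rep_coords_image_MC ..
  ultimately have "bij_betw T (proj_on JR ` MC V E) (MP V E)"
    unfolding bij_betw_def by blast
  moreover have "\<forall>w. \<forall>J\<in>JR. T w (Eof V J) = w J"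
    unfolding T JR using rep_coords_Eof by blast
  ultimately show ?thesis
    unfolding JR using bij_betw_Eof_JH_reps by blast
qed

end
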